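(* Let $\mathcal{G}$ be a g-sequent, $C$ a constraint, and $\mathrm{H}:=\mathrm{H}(\mathbf{G}(C))$. If $\mathrm{H}'$ is a fracturable subset of $\mathrm{H}$ (in $\mathsf{DG}(\mathrm H)$) and $\mathcal{G}$ satisfies $C$, then $\overline{\mathrm{H}'}(\mathcal{G})$ satisfies $C\ominus\mathbf{G}(\mathrm{H}')$.
   Context: Fix a countably infinite set $\mathtt{S}$ of sequents (atomic labels), a set $\mathcal{U}$ of vertices, and a non-empty finite set $\mathtt{E}$ of edge types. A g-sequent is $\mathcal{G}=(\mathcal{V},\mathcal{E},\mathcal{L})$ with $\mathcal{V}\subseteq\mathcal{U}$, $\mathcal{E}=\{\mathcal{E}_a\mid a\in\mathtt{E}\}$, $\mathcal{E}_a\subseteq\mathcal{V}\times\mathcal{V}$, $\mathcal{L}:\mathcal{V}\to\mathtt{S}$; $\mathcal U(\mathcal G)=\mathcal V$; written $\Gamma\vdash\Delta$ with $\Gamma$ the set of edge atoms $w\mathcal{E}_a u$ and $\Delta$ the set of prefixed sequents $w:S$; commas denote disjoint union. Let $\overline{\mathtt E}=\{\bar a\mid a\in\mathtt E\}$, $\bar{\bar z}=z$, $\overline{x_1\cdots x_n}=\bar x_n\cdots\bar x_1$, $\varepsilon$ empty string. Paths: $\mathcal{G}\models u\xrightarrow{a}w$ iff $(u,w)\in\mathcal{E}_a$; $u\xrightarrow{\bar a}w$ iff $(w,u)\in\mathcal{E}_a$; $u\xrightarrow{\varepsilon}w$ iff $u=w$; $u\xrightarrow{xs}w$ iff some $v$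 has $u\xrightarrow{x}v$, $v\xrightarrow{s}w$; $u\xrightarrow{\mathscr L}w$ iff $u\xrightarrow{s}w$ for some $s\in\mathscr L$. An $\mathtt E$-system is a finite set $\mathbf G$ of production rules $x\longrightarrow t$ ($x\in\mathtt E\cup\overline{\mathtt E}$, $t$ a string) such that $x\longrightarrow t\in\mathbf G$ iff $\bar x\longrightarrow\bar t\in\mathbf G$; $\mathbf G(s)=\{t\mid s\longrightarrow^*_{\mathbf G}t\}$ ($\longrightarrow^*_{\mathbf G}$: reflexive-transitive closure of rewriting one occurrence of a left side). For $p=x\longrightarrow t$, $\bar p=\bar x\longrightarrow\bar t$; $(p,\bar p)$ is a production pair; $P(\mathbf G)$ is the set of production pairs in $\mathbf G$. A constraint is a finite tree $C=(V,E,L)$, $V\subseteq\mathcal U$, each edge labelled $L(w,u)=\mathbf G'(a)$ for some $a\in\mathtt E$ and $\mathtt E$-system $\mathbf G'$ (which is said to participate in $C$); $\mathbf G(C)$ is the union of all $\mathtt E$-systems participating in $C$. $\mathcal G$ satisfies $C$ iff $V\subseteq\mathcal U(\mathcal G)$ and $\mathcal G\models w\xrightarrow{\mathbf G'(a)}u$ for every edge with $L(w,u)=\mathbf G'(a)$. Fracture: $C\ominus\mathbf G$ replaces every label $\mathbf G'(a)$ by $(\mathbf G'\setminus\mathbf G)(a)$. Horn rules: for $s=x_1\cdots x_n$, $w\mathcal E_s u$ abbreviates atoms $w\mathcal E_{x_1}v_1,\dots,v_{n-1}\mathcal E_{x_n}u$, with $v\mathcal E_{\bar a}z$ meaning $z\mathcal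 E_a v$ and $w\mathcal E_\varepsilon u$ meaning $w=u$. Forward Horn rule $h_f$: premise $\Gamma,w\mathcal{E}_s u,w\mathcal{E}_a u\vdash\Delta$, conclusion $\Gamma,w\mathcal{E}_s u\vdash\Delta$; backward Horn rule $h_b$: same with $w\mathcal E_a u$ replaced by $u\mathcal E_a w$. $\mathbf{G}(h_f)=\{a\longrightarrow s,\bar a\longrightarrow\bar s\}$, $\mathbf{G}(h_b)=\{\bar a\longrightarrow s,a\longrightarrow\bar s\}$, $\mathbf G(\mathrm H)=\bigcup_{h\in\mathrm H}\mathbf G(h)$, $P(h)=P(\mathbf G(h))$. For a production pair $(p,\bar p)$ with $p=a\longrightarrow s$ (resp. $p=\bar a\longrightarrow s$), $a\in\mathtt E$, $\mathrm H(p,\bar p)$ is the singleton of the corresponding forward (resp. backward) Horn rule; $\mathrm H(\mathbf G)=\bigcup_{(p,\bar p)\in P(\mathbf G)}\mathrm H(p,\bar p)$. Dependency graph: for distinct production pairs with $p=x\longrightarrow s$, $p'=y\longrightarrow t$, $(p,\bar p)\sqsubset(p',\bar p')$ iff $s$ or $\bar s$ contains the letter $y$; $\sqsubseteq$ is the reflexive-transitive closure. For Horn rules, $\mathsf{DG}(\mathrm H)=(\mathrm H,\sqsubseteq')$ with $h\sqsubseteq' h'$ iff the production pair of $h$ is $\sqsubseteq$ the production pair of $h'$. A subset $V'$ of a dependency graph $(V,\sqsubseteq)$ is fracturable iff there are no $v\in V'$, $v'\in V\setminus V'$ with $v\sqsubseteq v'$. Saturation: the inverse $\bar h$ of a Horn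 rule $h$ maps the conclusion of an instance of $h$ to its premise (adds the edge atom). $\overline{\mathrm H'}(\mathcal G)$ is obtained from $\mathcal G$ by repeatedly applying inverses of rules in $\mathrm H'$ as long as this changes the g-sequent. *)

theory Defs
  imports Main "HOL-Library.Countable"
begin

text \<open>Letters of E \<union> E-bar: Fw a is the edge type a, Bw a is its converse a-bar.\<close>
datatype 'e letter = Fw 'e | Bw 'e

fun lbar :: "'e letter \<Rightarrow> 'e letter" where
  "lbar (Fw a) = Bw a"
| "lbar (Bw a) = Fw a"

definition sbar :: "'e letter list \<Rightarrow> 'e letter list" where
  "sbar s = rev (map lbar s)"

type_synonym 'e production = "'e letter \<times> 'e letter list"

definition pbar :: "'e production \<Rightarrow> 'e production" where
  "pbar p = (lbar (fst p), sbar (snd p))"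

definition E_system :: "'e production set \<Rightarrow> bool" where
  "E_system Gs \<longleftrightarrow> finite Gs \<and> (\<forall>p. p \<in> Gs \<longleftrightarrow> pbar p \<in> Gs)"

definition rewrite_step :: "'e production set \<Rightarrow> ('e letter list \<times> 'e letter list) set" where
  "rewrite_step Gs = {(l @ [x] @ r, l @ t @ r) | l x r t. (x, t) \<in> Gs}"

definition lang :: "'e production set \<Rightarrow> 'e letter list \<Rightarrow> 'e letter list set" where
  "lang Gs s = {t. (s, t) \<in> (rewrite_step Gs)\<^sup>*}"

record ('u, 'e, 's) gseq =
  gV :: "'u set"
  gE :: "'e \<Rightarrow> ('u \<times> 'u) set"
  gL :: "'u \<Rightarrow> 's"

definition gseq_wf :: "('u, 'e, 's) gseq \<Rightarrow> bool" where
  "gseq_wf G \<longleftrightarrow> (\<forall>a. gE G a \<subseteq> gV G \<times> gV G)"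

fun lpath :: "('e \<Rightarrow> ('u \<times> 'u) set) \<Rightarrow> 'e letter list \<Rightarrow> 'u \<Rightarrow> 'u \<Rightarrow> bool" where
  "lpath E [] w u \<longleftrightarrow> w = u"
| "lpath E (Fw a # s) w u \<longleftrightarrow> (\<exists>v. (w, v) \<in> E a \<and> lpath E s v u)"
| "lpath E (Bw a # s) w u \<longleftrightarrow> (\<exists>v. (v, w) \<in> E a \<and> lpath E s v u)"

definition lang_path :: "('u, 'e, 's) gseq \<Rightarrow> 'e letter list set \<Rightarrow> 'u \<Rightarrow> 'u \<Rightarrow> bool" where
  "lang_path G L u w \<longleftrightarrow> (\<exists>s\<in>L. lpath (gE G) s u w)"

text \<open>A constraint: vertex set, directed tree edges, and for each edge a label G'(a),
  recorded as the pair (G', a) so that fracture can act on the system G'.\<close>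
record ('u, 'e) constr =
  cV :: "'u set"
  cE :: "('u \<times> 'u) set"
  cL :: "'u \<times> 'u \<Rightarrow> 'e production set \<times> 'e"

definition finite_tree :: "'u set \<Rightarrow> ('u \<times> 'u) set \<Rightarrow> bool" where
  "finite_tree V E \<longleftrightarrow> finite V \<and> V \<noteq> {} \<and> E \<subseteq> V \<times> V
     \<and> (\<forall>x y. (x, y) \<in> E \<longrightarrow> x \<noteq> y \<and> (y, x) \<notin> E)
     \<and> card E + 1 = card V
     \<and> (\<forall>x\<in>V. \<forall>y\<in>V. (x, y) \<in> (E \<union> E\<inverse>)\<^sup>*)"

definition constraint :: "('u, 'e) constr \<Rightarrow> bool" where
  "constraint C \<longleftrightarrow> finite_tree (cV C) (cE C) \<and> (\<forall>e\<in>cE C. E_system (fst (cL C e)))"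

definition sys_of_constr :: "('u, 'e) constr \<Rightarrow> 'e production set" where
  "sys_of_constr C = (\<Union>e\<in>cE C. fst (cL C e))"

definition satisfies :: "('u, 'e, 's) gseq \<Rightarrow> ('u, 'e) constr \<Rightarrow> bool" where
  "satisfies G C \<longleftrightarrow> cV C \<subseteq> gV G \<and>
     (\<forall>(w, u)\<in>cE C. lang_path G (lang (fst (cL C (w, u))) [Fw (snd (cL C (w, u)))]) w u)"

definition fracture :: "('u, 'e) constr \<Rightarrow> 'e production set \<Rightarrow> ('u, 'e) constr" where
  "fracture C Gs = C\<lparr>cL := (\<lambda>e. (fst (cL C e) - Gs, snd (cL C e)))\<rparr>"

text \<open>Horn_f a s: forward rule (adds w E_a u given w E_s u);
      Horn_b a s: backward rule (adds u E_a w given w E_s u).\<close>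
datatype 'e horn = Horn_f 'e "'e letter list" | Horn_b 'e "'e letter list"

fun horn_sys :: "'e horn \<Rightarrow> 'e production set" where
  "horn_sys (Horn_f a s) = {(Fw a, s), (Bw a, sbar s)}"
| "horn_sys (Horn_b a s) = {(Bw a, s), (Fw a, sbar s)}"

definition sys_of_horns :: "'e horn set \<Rightarrow> 'e production set" where
  "sys_of_horns H = (\<Union>h\<in>H. horn_sys h)"

definition prod_pair :: "'e production \<Rightarrow> 'e production set" where
  "prod_pair p = {p, pbar p}"

definition prod_pairs :: "'e production set \<Rightarrow> 'e production set set" where
  "prod_pairs Gs = prod_pair ` Gs"

fun horn_of_prod :: "'e production \<Rightarrow> 'e horn" where
  "horn_of_prod (Fw a, s) = Horn_f a s"
| "horn_of_prod (Bw a, s) = Horn_b a s"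

text \<open>H(G) = union over production pairs (p, p-bar) of H(p, p-bar); every p \<in> G
  arises as first component of the pair (p, p-bar).\<close>
definition horns_of_sys :: "'e production set \<Rightarrow> 'e horn set" where
  "horns_of_sys Gs = horn_of_prod ` Gs"

definition dep_step :: "'e production set \<Rightarrow> 'e production set \<Rightarrow> bool" where
  "dep_step P P' \<longleftrightarrow> P \<noteq> P' \<and>
     (\<exists>p\<in>P. \<exists>p'\<in>P'. fst p' \<in> set (snd p) \<or> fst p' \<in> set (sbar (snd p)))"

definition horn_dep_le :: "'e horn set \<Rightarrow> 'e horn \<Rightarrow> 'e horn \<Rightarrow> bool" where
  "horn_dep_le H h h' \<longleftrightarrow>
     (horn_sys h, horn_sys h') \<in>
       ({(P, P'). P \<in> horn_sys ` H \<and> P' \<in> horn_sys ` H \<and> dep_step P P'})\<^sup>*"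

definition fracturable :: "'e horn set \<Rightarrow> 'e horn set \<Rightarrow> bool" where
  "fracturable H H' \<longleftrightarrow> H' \<subseteq> H \<and>
     \<not> (\<exists>h\<in>H'. \<exists>h'\<in>H - H'. horn_dep_le H h h')"

definition horn_closed :: "'e horn set \<Rightarrow> 'u set \<Rightarrow> ('e \<Rightarrow> ('u \<times> 'u) set) \<Rightarrow> bool" where
  "horn_closed H V E \<longleftrightarrow>
     (\<forall>a s w u. Horn_f a s \<in> H \<longrightarrow> w \<in> V \<longrightarrow> u \<in> V \<longrightarrow> lpath E s w u \<longrightarrow> (w, u) \<in> E a) \<and>
     (\<forall>a s w u. Horn_b a s \<in> H \<longrightarrow> w \<in> V \<longrightarrow> u \<in> V \<longrightarrow> lpath E s w u \<longrightarrow> (u, w) \<in> E a)"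

text \<open>Result of exhaustively applying inverses of rules in H: the least extension of the edges
  closed under them (vertices and labels unchanged).\<close>
definition saturate :: "'e horn set \<Rightarrow> ('u, 'e, 's) gseq \<Rightarrow> ('u, 'e, 's) gseq" where
  "saturate H G = G\<lparr>gE := (\<lambda>a. \<Inter>{E' a | E'. (\<forall>b. gE G b \<subseteq> E' b) \<and> horn_closed H (gV G) E'})\<rparr>"

end

theory Submission
  imports Defs
begin

text \<open>Let F be the productions of the fractured Horn rules. Fracturability means that no right-hand
  side of a production in F mentions a left-hand side of a production outside F, so once a derivation
  in the constraint's systems applies a production x \<longrightarrow> t of F, the factor t is never rewritten
  again. That step can therefore be skipped, provided the path segment along t can be replaced by a
  single x-step; and this is exactly what closure of the saturated edges under the inverse Horn rules
  of F provides. Skipping all such steps turns every witnessing derivation into one avoiding F.\<close>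

lemma lpath_append:
  "lpath E (s @ t) v w \<longleftrightarrow> (\<exists>z. lpath E s v z \<and> lpath E t z w)"
proof (induction s arbitrary: v)
  case (Cons x s)
  then show ?case by (cases x) auto
qed simp

lemma lpath_sbar: "lpath E (sbar s) v w \<longleftrightarrow> lpath E s w v"
proof (induction s arbitrary: v w)
  case (Cons x s)
  have "sbar (x # s) = sbar s @ [lbar x]" by (simp add: sbar_def)
  with Cons show ?case by (cases x) (auto simp: lpath_append)
qed (auto simp: sbar_def)

lemma lpath_mono: "(\<And>b. E b \<subseteq> E' b) \<Longrightarrow> lpath E s v w \<Longrightarrow> lpath E' s v w"
proof (induction s arbitrary: v)
  case (Cons x s)
  then show ?case by (cases x) auto
qed simp

lemma lpath_end_in: "(\<And>b. E b \<subseteq> V \<times> V) \<Longrightarrow> lpath E s v w \<Longrightarrow> v \<in> V \<Longrightarrow> w \<in> V"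
proof (induction s arbitrary: v)
  case (Cons x s)
  then show ?case by (cases x) auto
qed simp

lemma rewrite_step_append:
  assumes "(s, s') \<in> rewrite_step R"
  shows "(l @ s @ r, l @ s' @ r) \<in> rewrite_step R"
proof -
  obtain l0 x r0 t where "s = l0 @ [x] @ r0" "s' = l0 @ t @ r0" "(x, t) \<in> R"
    using assms unfolding rewrite_step_def by blast
  then have "l @ s @ r = (l @ l0) @ [x] @ (r0 @ r)" "l @ s' @ r = (l @ l0) @ t @ (r0 @ r)"
    and "(x, t) \<in> R" by simp_all
  then show ?thesis unfolding rewrite_step_def by blast
qed

lemma rewrite_steps_append:
  "(s, s') \<in> (rewrite_step R)\<^sup>* \<Longrightarrow> (l @ s @ r, l @ s' @ r) \<in> (rewrite_step R)\<^sup>*"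
  by (induction rule: rtrancl_induct) (auto intro: rtrancl_into_rtrancl rewrite_step_append)

lemma rewrite_step_append_cases:
  assumes "(s @ t, u) \<in> rewrite_step R"
  obtains s' where "(s, s') \<in> rewrite_step R" "u = s' @ t"
        | t' where "(t, t') \<in> rewrite_step R" "u = s @ t'"
proof -
  obtain l x r t0 where e: "s @ t = l @ [x] @ r" "u = l @ t0 @ r" "(x, t0) \<in> R"
    using assms unfolding rewrite_step_def by blast
  from e(1) consider (left) l' where "s = l @ [x] @ l'" "r = l' @ t"
    | (right) r' where "t = r' @ [x] @ r" "l = s @ r'"
    by (auto simp: append_eq_append_conv2 Cons_eq_append_conv append_eq_Cons_conv)
  then show thesis
  proof cases
    case (left l')
    with e have "(s, l @ t0 @ l') \<in> rewrite_step R" "u = (l @ t0 @ l') @ t"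
      unfolding rewrite_step_def by auto
    then show thesis by (rule that(1))
  next
    case (right r')
    with e have "(t, r' @ t0 @ r) \<in> rewrite_step R" "u = s @ r' @ t0 @ r"
      unfolding rewrite_step_def by auto
    then show thesis by (rule that(2))
  qed
qed

definition inert :: "'e production set \<Rightarrow> 'e letter list \<Rightarrow> bool" where
  "inert R m \<longleftrightarrow> (\<forall>p\<in>R. fst p \<notin> set m)"

lemma inert_mono: "inert R m \<Longrightarrow> R' \<subseteq> R \<Longrightarrow> inert R' m"
  unfolding inert_def by blast

lemma inert_no_rewrite_step: "inert R m \<Longrightarrow> (m, m') \<notin> rewrite_step R"
  unfolding inert_def rewrite_step_def by fastforce

lemma rewrite_steps_inert_factor:
  assumes "(l @ m @ r, u) \<in> (rewrite_step R)\<^sup>*" "inert R m"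
  obtains l' r' where "u = l' @ m @ r'"
    "(l, l') \<in> (rewrite_step R)\<^sup>*" "(r, r') \<in> (rewrite_step R)\<^sup>*"
proof -
  from assms(1) have "\<exists>l' r'. u = l' @ m @ r' \<and>
      (l, l') \<in> (rewrite_step R)\<^sup>* \<and> (r, r') \<in> (rewrite_step R)\<^sup>*"
  proof (induction rule: rtrancl_induct)
    case (step y z)
    then obtain l' r' where y: "y = l' @ m @ r'"
      "(l, l') \<in> (rewrite_step R)\<^sup>*" "(r, r') \<in> (rewrite_step R)\<^sup>*" by blast
    from step.hyps(2) y(1) have "(l' @ (m @ r'), z) \<in> rewrite_step R" by simp
    then show ?case
    proof (cases rule: rewrite_step_append_cases)
      case (1 l'')
      then show ?thesis using y by (blast intro: rtrancl_into_rtrancl)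
    next
      case (2 mr)
      from \<open>(m @ r', mr) \<in> rewrite_step R\<close> show ?thesis
      proof (cases rule: rewrite_step_append_cases)
        case 1
        then show ?thesis using inert_no_rewrite_step[OF assms(2)] by blast
      next
        case (2 r'')
        then show ?thesis using y \<open>z = l' @ mr\<close> by (blast intro: rtrancl_into_rtrancl)
      qed
    qed
  qed blast
  then show thesis using that by blast
qed

lemma rewrite_steps_avoid_sound_productions:
  assumes EV: "\<And>b. E b \<subseteq> V \<times> V"
    and rhs_inert: "\<And>p. p \<in> R \<inter> F \<Longrightarrow> inert (R - F) (snd p)"
    and sound: "\<And>x t v w. (x, t) \<in> F \<Longrightarrow> v \<in> V \<Longrightarrow> w \<in> V \<Longrightarrow> lpath E t v w \<Longrightarrow> lpath E [x] v w"
  shows "(s, t) \<in> (rewrite_step R)\<^sup>* \<Longrightarrow> lpath E t v v' \<Longrightarrow> v \<in> V \<Longrightarrow>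
    \<exists>s'. (s, s') \<in> (rewrite_step (R - F))\<^sup>* \<and> lpath E s' v v'"
proof (induction s rule: converse_rtrancl_induct)
  case (step s s1)
  then obtain s1' where s1': "(s1, s1') \<in> (rewrite_step (R - F))\<^sup>*" "lpath E s1' v v'" by blast
  from step.hyps(1) obtain l x r t' where e: "s = l @ [x] @ r" "s1 = l @ t' @ r" "(x, t') \<in> R"
    unfolding rewrite_step_def by blast
  show ?case
  proof (cases "(x, t') \<in> F")
    case False
    then have "(s, s1) \<in> rewrite_step (R - F)" using e unfolding rewrite_step_def by blast
    with s1' show ?thesis by (meson converse_rtrancl_into_rtrancl)
  next
    case True
    with e(3) rhs_inert have "inert (R - F) t'" by fastforce
    with s1'(1)[unfolded e(2)] obtain l' r' where d: "s1' = l' @ t' @ r'"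
      "(l, l') \<in> (rewrite_step (R - F))\<^sup>*" "(r, r') \<in> (rewrite_step (R - F))\<^sup>*"
      by (rule rewrite_steps_inert_factor)
    from s1'(2) d(1) obtain v1 v2 where
      p: "lpath E l' v v1" "lpath E t' v1 v2" "lpath E r' v2 v'"
      by (auto simp: lpath_append)
    have "v1 \<in> V" using lpath_end_in[OF EV p(1) \<open>v \<in> V\<close>] .
    moreover have "v2 \<in> V" using lpath_end_in[OF EV p(2) \<open>v1 \<in> V\<close>] .
    ultimately have "lpath E [x] v1 v2" using sound[OF True] p(2) by blast
    with p(3) have "lpath E ([x] @ r') v1 v'" unfolding lpath_append by blast
    with p(1) have "lpath E (l' @ [x] @ r') v v'" unfolding lpath_append[of E l'] by blast
    moreover have "(s, l' @ [x] @ r') \<in> (rewrite_step (R - F))\<^sup>*"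
      using rewrite_steps_append[OF d(2), of "[]" "[x] @ r"]
        rewrite_steps_append[OF d(3), of "l' @ [x]" "[]"] e(1) by (simp add: rtrancl_trans)
    ultimately show ?thesis by blast
  qed
qed blast

lemma horn_sys_horn_of_prod: "horn_sys (horn_of_prod p) = {p, pbar p}"
  by (cases p, rename_tac x s, case_tac x) (auto simp: pbar_def)

lemma horn_closed_sound:
  assumes "horn_closed H V E" "(x, t) \<in> sys_of_horns H" "v \<in> V" "w \<in> V" "lpath E t v w"
  shows "lpath E [x] v w"
proof -
  from assms(2) obtain h where h: "h \<in> H" "(x, t) \<in> horn_sys h"
    by (auto simp: sys_of_horns_def)
  then show ?thesis
    using assms(1,3-) unfolding horn_closed_def by (cases h) (auto simp: lpath_sbar)
qed

text \<open>A production of the fractured rules H' whose right-hand side contained a left-hand side of a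
  production q outside them would make the Horn rule of q, which lies outside H', depend on a rule in H'.\<close>

lemma fracturable_inert:
  assumes frac: "fracturable (horns_of_sys Gs) H'" and p: "p \<in> sys_of_horns H'"
  shows "inert (Gs - sys_of_horns H') (snd p)"
  unfolding inert_def
proof (intro ballI notI)
  fix q assume q: "q \<in> Gs - sys_of_horns H'" "fst q \<in> set (snd p)"
  from p obtain h where h: "h \<in> H'" "p \<in> horn_sys h" by (auto simp: sys_of_horns_def)
  have hq: "horn_of_prod q \<in> horns_of_sys Gs" using q(1) by (simp add: horns_of_sys_def)
  have "horn_of_prod q \<notin> H'"
    using q(1) horn_sys_horn_of_prod[of q] by (auto simp: sys_of_horns_def)
  then have no_dep: "\<not> horn_dep_le (horns_of_sys Gs) h (horn_of_prod q)"
    using frac h(1) hq unfolding fracturable_def by blast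
  have "horn_sys h \<noteq> horn_sys (horn_of_prod q)"
    using no_dep unfolding horn_dep_le_def by auto
  then have "dep_step (horn_sys h) (horn_sys (horn_of_prod q))"
    unfolding dep_step_def using h(2) q(2) horn_sys_horn_of_prod[of q] by force
  moreover have "h \<in> horns_of_sys Gs" using frac h(1) unfolding fracturable_def by blast
  ultimately show False
    using no_dep hq unfolding horn_dep_le_def by blast
qed

lemma gV_saturate [simp]: "gV (saturate H G) = gV G"
  by (simp add: saturate_def)

lemma saturate_extends: "gE G b \<subseteq> gE (saturate H G) b"
  by (auto simp: saturate_def)

lemma mem_saturate_iff:
  "e \<in> gE (saturate H G) a \<longleftrightarrow>
    (\<forall>E. (\<forall>b. gE G b \<subseteq> E b) \<longrightarrow> horn_closed H (gV G) E \<longrightarrow> e \<in> E a)"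
  unfolding saturate_def by auto

lemma saturate_least:
  assumes "\<And>b. gE G b \<subseteq> E b" "horn_closed H (gV G) E"
  shows "gE (saturate H G) a \<subseteq> E a"
  using assms by (auto simp: mem_saturate_iff)

lemma saturate_within_vertices:
  assumes "gseq_wf G"
  shows "gE (saturate H G) a \<subseteq> gV G \<times> gV G"
proof (rule saturate_least)
  show "horn_closed H (gV G) (\<lambda>_. gV G \<times> gV G)"
    unfolding horn_closed_def by blast
qed (use assms in \<open>simp add: gseq_wf_def\<close>)

lemma saturate_horn_closed: "horn_closed H (gV G) (gE (saturate H G))"
  unfolding horn_closed_def
proof (intro conjI allI impI)
  fix a s w u
  assume h: "Horn_f a s \<in> H" "w \<in> gV G" "u \<in> gV G" and p: "lpath (gE (saturate H G)) s w u"
  show "(w, u) \<in> gE (saturate H G) a"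
  proof (clarsimp simp only: mem_saturate_iff)
    fix E assume E: "\<forall>b. gE G b \<subseteq> E b" "horn_closed H (gV G) E"
    have "lpath E s w u" using lpath_mono[OF saturate_least[OF spec[OF E(1)] E(2)] p] .
    with h E(2) show "(w, u) \<in> E a" unfolding horn_closed_def by blast
  qed
next
  fix a s w u
  assume h: "Horn_b a s \<in> H" "w \<in> gV G" "u \<in> gV G" and p: "lpath (gE (saturate H G)) s w u"
  show "(u, w) \<in> gE (saturate H G) a"
  proof (clarsimp simp only: mem_saturate_iff)
    fix E assume E: "\<forall>b. gE G b \<subseteq> E b" "horn_closed H (gV G) E"
    have "lpath E s w u" using lpath_mono[OF saturate_least[OF spec[OF E(1)] E(2)] p] .
    with h E(2) show "(u, w) \<in> E a" unfolding horn_closed_def by blast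
  qed
qed

lemma lang_path_saturate_fracture:
  assumes G: "gseq_wf G" and frac: "fracturable (horns_of_sys Gs) H'"
    and "R \<subseteq> Gs" "w \<in> gV G" "lang_path G (lang R s) w u"
  shows "lang_path (saturate H' G) (lang (R - sys_of_horns H') s) w u"
proof -
  let ?F = "sys_of_horns H'" and ?E = "gE (saturate H' G)"
  have sound: "\<And>x t v w. (x, t) \<in> ?F \<Longrightarrow> v \<in> gV G \<Longrightarrow> w \<in> gV G \<Longrightarrow> lpath ?E t v w \<Longrightarrow>
      lpath ?E [x] v w"
    by (rule horn_closed_sound[OF saturate_horn_closed])
  have "R - ?F \<subseteq> Gs - ?F" using \<open>R \<subseteq> Gs\<close> by blast
  then have rhs_inert: "\<And>p. p \<in> R \<inter> ?F \<Longrightarrow> inert (R - ?F) (snd p)"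
    using fracturable_inert[OF frac] inert_mono by blast
  obtain t where "(s, t) \<in> (rewrite_step R)\<^sup>*" "lpath (gE G) t w u"
    using \<open>lang_path G (lang R s) w u\<close> unfolding lang_path_def lang_def by blast
  moreover from this(2) have "lpath ?E t w u" by (rule lpath_mono[OF saturate_extends])
  ultimately obtain t' where "(s, t') \<in> (rewrite_step (R - ?F))\<^sup>*" "lpath ?E t' w u"
    using rewrite_steps_avoid_sound_productions[of ?E "gV G" R ?F]
      saturate_within_vertices[OF G] rhs_inert sound \<open>w \<in> gV G\<close>
    by blast
  then show ?thesis unfolding lang_path_def lang_def by blast
qed

theorem mainTheorem7:
  fixes G :: "('u, 'e::finite, 's::countable) gseq"
    and C :: "('u, 'e) constr"
    and H' :: "'e horn set"
  assumes "infinite (UNIV :: 's set)"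
    and "gseq_wf G"
    and "constraint C"
    and "fracturable (horns_of_sys (sys_of_constr C)) H'"
    and "satisfies G C"
  shows "satisfies (saturate H' G) (fracture C (sys_of_horns H'))"
proof -
  have vertices: "cE C \<subseteq> cV C \<times> cV C" "cV C \<subseteq> gV G"
    using assms(3,5) unfolding constraint_def finite_tree_def satisfies_def by simp_all
  have "lang_path (saturate H' G)
      (lang (fst (cL C (w, u)) - sys_of_horns H') [Fw (snd (cL C (w, u)))]) w u"
    if "(w, u) \<in> cE C" for w u
  proof (rule lang_path_saturate_fracture[OF assms(2,4)])
    show "fst (cL C (w, u)) \<subseteq> sys_of_constr C" using that by (auto simp: sys_of_constr_def)
    show "w \<in> gV G" using that vertices by blast
    show "lang_path G (lang (fst (cL C (w, u))) [Fw (snd (cL C (w, u)))]) w u"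
      using assms(5) that unfolding satisfies_def by blast
  qed
  with assms(5) show ?thesis
    unfolding satisfies_def by (auto simp: fracture_def)
qed

end
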